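(* $$\zeta(3) = 14 \sum_{n=1}^{\infty} \frac{1}{n^3 \sinh(\pi n)} - \frac{11}{2} \sum_{n=1}^{\infty} \frac{1}{n^3(e^{2\pi n} - 1)} - \frac{7}{2} \sum_{n=1}^{\infty} \frac{1}{n^3(e^{2\pi n} + 1)}.$$
   Context: $\zeta$ denotes the Riemann zeta function, $\zeta(s)=\sum_{n\ge1} n^{-s}$ for $\operatorname{Re} s>1$. *)

theory Defs
  imports Complex_Main
begin

definition zeta_real :: "real \<Rightarrow> real" where
  "zeta_real s = (\<Sum>n. 1 / (real (Suc n)) powr s)"

end

theory Submission
  imports Defs "HOL-Analysis.Analysis" "HOL-Real_Asymp.Real_Asymp"
begin

text \<open>
  Ramanujan-type formula for zeta(3) in terms of the Lambert-type sums
    L(c) = sum over n >= 1 of 1 / (n^3 (exp (c n) - 1)).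

  For a > 0 the series C(a) = sum over k >= 1 of coth (a k) / k^3 is evaluated in two ways.
  Writing coth y = 1 + 2 / (exp (2 y) - 1) gives C(a) = zeta(3) + 2 L(2a).  Expanding
  coth by its partial fraction series coth y = 1/y + sum over m >= 1 of 2y / (y^2 + pi^2 m^2),
  itself the logarithmic derivative of the sine product formula, gives
  C(a) = zeta(4)/a + a G(a) with the double series
    G(a) = sum over k, m >= 1 of 2 / (k^2 (a^2 k^2 + pi^2 m^2)).
  Exchanging k and m shows G(a) + G(b) = 2 zeta(2)^2 / pi^2 = pi^2/18 whenever a b = pi^2.
  The partial fraction series also yields zeta(4) = pi^4/90 by letting y tend to 0.
  Comparing the two evaluations at a = pi/2, pi, 2 pi and eliminating G gives
  zeta(3) = 28 L(pi) - 37 L(2 pi) + 7 L(4 pi); the theorem follows by rewriting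
  1/sinh x and 1/(exp x + 1) in terms of 1/(exp x - 1) and 1/(exp (2x) - 1).
\<close>

definition coth :: "real \<Rightarrow> real" where
  "coth y = cosh y / sinh y"

lemma coth_conv_exp:
  assumes "y \<noteq> 0"
  shows "coth y = 1 + 2 / (exp (2 * y) - 1)"
proof -
  have "exp (2 * y) = exp y * exp y" by (simp flip: exp_add)
  moreover have "exp y * exp y \<noteq> 1"
    using assms by (simp flip: exp_add)
  ultimately show ?thesis
    by (simp add: coth_def cosh_def sinh_def exp_minus field_simps)
qed

text \<open>
  The product formula for sinh, obtained from the sine product formula at an imaginary
  argument.
\<close>
lemma sinh_product_formula:
  fixes y :: real
  assumes "y \<noteq> 0"
  shows "(\<lambda>n. \<Prod>k=1..n. 1 + y^2 / (pi^2 * real k ^ 2)) \<longlonglongrightarrow> sinh y / y"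
proof -
  define z where "z = \<i> * complex_of_real (y / pi)"
  define c where "c = -\<i> / complex_of_real y"
  have "(\<lambda>n. c * (of_real pi * z * (\<Prod>k=1..n. 1 - z^2 / of_nat k^2)))
          \<longlonglongrightarrow> c * sin (of_real pi * z)"
    by (intro tendsto_mult_left sin_product_formula_complex)
  also have "(\<lambda>n. c * (of_real pi * z * (\<Prod>k=1..n. 1 - z^2 / of_nat k^2)))
      = (\<lambda>n. complex_of_real (\<Prod>k=1..n. 1 + y^2 / (pi^2 * real k ^ 2)))"
    using assms by (auto simp: z_def c_def field_simps)
  also have "c * sin (of_real pi * z) = complex_of_real (sinh y / y)"
    using assms by (simp add: z_def c_def sin_i_times sinh_def exp_minus exp_of_real
        field_simps)
  finally show ?thesis
    by (simp only: tendsto_of_real_iff)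
qed

lemma summable_inverse_power_Suc:
  assumes "k \<ge> 2"
  shows "summable (\<lambda>n. 1 / real (Suc n) ^ k)"
  using inverse_power_summable[of k, where 'a=real] assms
  by (subst summable_Suc_iff) (simp add: divide_inverse)

lemma has_field_derivative_ln_one_plus_square:
  fixes c :: real
  assumes "c > 0"
  shows "((\<lambda>t. ln (1 + t^2 / c)) has_field_derivative 2 * t / (t^2 + c)) (at t within S)"
proof -
  have "1 + t^2 / c > 0" using assms by (intro add_pos_nonneg) auto
  then have "((\<lambda>t. ln (1 + t^2 / c)) has_field_derivative (2 * t / c) / (1 + t^2 / c)) (at t within S)"
    using assms by (auto intro!: derivative_eq_intros)
  also have "(2 * t / c) / (1 + t^2 / c) = 2 * t / (t^2 + c)"
    using assms by (simp add: field_simps)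
  finally show ?thesis .
qed

lemma ln_sinh_sums:
  assumes "y > 0"
  shows "(\<lambda>m. ln (1 + y^2 / (pi^2 * real (Suc m) ^ 2))) sums ln (sinh y / y)"
proof -
  have "sinh y > 0" using assms by (simp add: sinh_real_pos_iff)
  hence "(\<lambda>n. ln (\<Prod>k=1..n. 1 + y^2 / (pi^2 * real k ^ 2))) \<longlonglongrightarrow> ln (sinh y / y)"
    using assms by (intro tendsto_ln sinh_product_formula) auto
  moreover have "ln (\<Prod>k=1..n. 1 + y^2 / (pi^2 * real k ^ 2))
      = (\<Sum>m<n. ln (1 + y^2 / (pi^2 * real (Suc m) ^ 2)))" for n
  proof -
    have "ln (\<Prod>k=1..n. 1 + y^2 / (pi^2 * real k ^ 2))
        = (\<Sum>k=1..n. ln (1 + y^2 / (pi^2 * real k ^ 2)))"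
      by (intro ln_prod) (auto simp: add_pos_nonneg[THEN less_imp_neq, symmetric])
    then show ?thesis by (simp add: sum.atLeast1_atMost_eq)
  qed
  ultimately show ?thesis by (simp add: sums_def)
qed

text \<open>
  Partial fraction expansion of coth: the series of logarithms may be differentiated
  termwise, since the differentiated series converges uniformly on bounded intervals.
\<close>
lemma coth_partial_fractions:
  assumes y: "y > 0"
  shows "(\<lambda>m. 2 * y / (y^2 + pi^2 * real (Suc m) ^ 2)) sums (coth y - 1 / y)"
proof -
  define S where "S = {0<..<y+1}"
  define f where "f m t = ln (1 + t^2 / (pi^2 * real (Suc m) ^ 2))" for m t
  define f' where "f' m t = 2 * t / (t^2 + pi^2 * real (Suc m) ^ 2)" for m t
  have f'_nonneg: "0 \<le> f' m t" if "t \<ge> 0" for m t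
    using that by (simp add: f'_def)
  have f'_bound: "f' m t \<le> (2 * (y+1) / pi^2) * (1 / real (Suc m) ^ 2)" if "t \<in> S" for m t
  proof -
    have "f' m t \<le> 2 * (y+1) / (pi^2 * real (Suc m) ^ 2)"
      unfolding f'_def using that by (intro frac_le) (auto simp: S_def)
    then show ?thesis by simp
  qed
  have bound_summable: "summable (\<lambda>m. (2 * (y+1) / pi^2) * (1 / real (Suc m) ^ 2))"
    by (intro summable_mult summable_inverse_power_Suc) simp
  have deriv: "(f m has_field_derivative f' m t) (at t within S)" for m t
    unfolding f_def f'_def by (rule has_field_derivative_ln_one_plus_square) simp
  have "uniformly_convergent_on S (\<lambda>n t. \<Sum>m<n. f' m t)"
    by (rule Weierstrass_m_test'[OF _ bound_summable])
      (use f'_bound f'_nonneg in \<open>auto simp: S_def\<close>)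
  moreover have "convex S" "y \<in> S" "y \<in> interior S"
    using y by (auto simp: S_def interior_open)
  moreover have "summable (\<lambda>m. f m y)"
    using ln_sinh_sums[OF y] by (auto simp: f_def sums_iff)
  ultimately have series_deriv:
    "((\<lambda>t. \<Sum>m. f m t) has_field_derivative (\<Sum>m. f' m y)) (at y)"
    using deriv by (intro has_field_derivative_series'(2)[of S]) auto
  have "(\<Sum>m. f m t) = ln (sinh t / t)" if "t > 0" for t
    unfolding f_def using ln_sinh_sums[OF that] by (rule sums_unique[symmetric])
  then have "\<forall>\<^sub>F t in nhds y. (\<Sum>m. f m t) = ln (sinh t / t)"
    using eventually_nhds_in_open[of "{0<..}" y] y by (auto elim!: eventually_mono)
  moreover have "((\<lambda>t. ln (sinh t / t)) has_field_derivative coth y - 1 / y) (at y)"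
  proof -
    have "sinh y > 0" using y by (simp add: sinh_real_pos_iff)
    then show ?thesis using y
      by (auto intro!: derivative_eq_intros simp: coth_def field_simps power2_eq_square)
  qed
  ultimately have "(\<Sum>m. f' m y) = coth y - 1 / y"
    using series_deriv by (metis DERIV_cong_ev DERIV_unique)
  moreover have "summable (\<lambda>m. f' m y)"
    by (rule summable_comparison_test'[OF bound_summable])
      (use f'_bound f'_nonneg y in \<open>auto simp: S_def\<close>)
  ultimately show ?thesis by (simp add: sums_iff f'_def)
qed

lemma zeta_real_sums:
  assumes "k \<ge> 2"
  shows "(\<lambda>n. 1 / real (Suc n) ^ k) sums zeta_real (real k)"
  using summable_sums[OF summable_inverse_power_Suc[OF assms]]
  by (simp add: zeta_real_def powr_realpow)

lemma zeta_real_2: "zeta_real 2 = pi^2 / 6"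
proof -
  have "(\<lambda>n. 1 / real (Suc n) ^ 2) sums (pi^2 / 6)"
    using inverse_squares_sums by simp
  then show ?thesis
    using sums_unique2[OF zeta_real_sums[of 2]] by simp
qed

text \<open>
  Combining the partial fraction series for coth with zeta(2) evaluates a series whose
  limit as y tends to 0 is zeta(4)/pi^2.
\<close>
lemma inverse_square_times_quadratic_sums:
  assumes y: "y > 0"
  shows "(\<lambda>m. 1 / (real (Suc m) ^ 2 * (y^2 + pi^2 * real (Suc m) ^ 2)))
           sums ((pi^2 / 6 - pi^2 / (2 * y) * (coth y - 1 / y)) / y^2)"
proof -
  have "(\<lambda>m. (1 / real (Suc m) ^ 2 - pi^2 / (2 * y) * (2 * y / (y^2 + pi^2 * real (Suc m) ^ 2))) / y^2)
          sums ((pi^2 / 6 - pi^2 / (2 * y) * (coth y - 1 / y)) / y^2)"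
    using zeta_real_sums[of 2] y
    by (intro sums_divide sums_diff sums_mult coth_partial_fractions) (auto simp: zeta_real_2)
  also have "(\<lambda>m. (1 / real (Suc m) ^ 2 - pi^2 / (2 * y) * (2 * y / (y^2 + pi^2 * real (Suc m) ^ 2))) / y^2)
      = (\<lambda>m. 1 / (real (Suc m) ^ 2 * (y^2 + pi^2 * real (Suc m) ^ 2)))"
  proof
    fix m
    define M where "M = real (Suc m)"
    define D where "D = y^2 + pi^2 * M^2"
    have "D > 0" "M > 0" using y by (auto simp: D_def M_def intro: add_pos_nonneg)
    then have "(1 / M^2 - pi^2 / (2 * y) * (2 * y / D)) / y^2 = ((D - pi^2 * M^2) / (M^2 * D)) / y^2"
      using y by (simp add: field_simps)
    also have "\<dots> = 1 / (M^2 * D)"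
      using y by (simp add: D_def)
    finally show "(1 / real (Suc m) ^ 2 - pi^2 / (2 * y) * (2 * y / (y^2 + pi^2 * real (Suc m) ^ 2))) / y^2
        = 1 / (real (Suc m) ^ 2 * (y^2 + pi^2 * real (Suc m) ^ 2))"
      by (simp only: M_def D_def)
  qed
  finally show ?thesis .
qed

text \<open>
  Letting y tend to 0 in the previous series (Tannery's theorem on one side, an asymptotic
  expansion of coth on the other) gives zeta(4).
\<close>
lemma zeta_real_4: "zeta_real 4 = pi^4 / 90"
proof -
  define a where "a m y = 1 / (real (Suc m) ^ 2 * (y^2 + pi^2 * real (Suc m) ^ 2))" for m y
  define b where "b m = 1 / real (Suc m) ^ 4 / pi^2" for m
  have b_sums: "b sums (zeta_real 4 / pi^2)"
    unfolding b_def using zeta_real_sums[of 4] by (intro sums_divide) simp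
  have a_le_b: "norm (a m y) \<le> b m" for m y
  proof -
    define M where "M = real (Suc m)"
    have "M > 0" by (simp add: M_def)
    then have "1 / (M^2 * (y^2 + pi^2 * M^2)) \<le> 1 / (M^2 * (pi^2 * M^2))"
      by (intro frac_le mult_left_mono) auto
    also have "\<dots> = 1 / M ^ 4 / pi^2"
      by (simp add: power2_eq_square power4_eq_xxxx)
    finally show ?thesis
      unfolding a_def b_def M_def[symmetric] by (simp add: add_nonneg_nonneg)
  qed
  have a_lim: "(a m \<longlongrightarrow> b m) (at_right 0)" for m
  proof -
    have "(a m \<longlongrightarrow> 1 / (real (Suc m) ^ 2 * (0^2 + pi^2 * real (Suc m) ^ 2))) (at_right 0)"
      unfolding a_def by (intro tendsto_intros) auto
    then show ?thesis by (simp add: b_def power2_eq_square power4_eq_xxxx mult_ac)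
  qed
  have "eventually (\<lambda>(m, y). norm (a m y) \<le> b m) (at_top \<times>\<^sub>F at_right 0)"
    using a_le_b by (intro always_eventually) auto
  then have "((\<lambda>y. \<Sum>m. a m y) \<longlongrightarrow> (\<Sum>m. b m)) (at_right 0)"
    using tannerys_theorem[OF a_lim _ sums_summable[OF b_sums]] by simp
  moreover have "\<forall>\<^sub>F y in at_right 0.
      (\<Sum>m. a m y) = (pi^2 / 6 - pi^2 / (2 * y) * (coth y - 1 / y)) / y^2"
    using eventually_at_right_less[of 0] unfolding a_def
    by eventually_elim (rule sums_unique[OF inverse_square_times_quadratic_sums, symmetric])
  ultimately have "((\<lambda>y. (pi^2 / 6 - pi^2 / (2 * y) * (coth y - 1 / y)) / y^2)
      \<longlongrightarrow> zeta_real 4 / pi^2) (at_right 0)"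
    unfolding sums_unique[OF b_sums, symmetric] by (rule Lim_transform_eventually)
  moreover have "((\<lambda>y. (pi^2 / 6 - pi^2 / (2 * y) * (coth y - 1 / y)) / y^2)
      \<longlongrightarrow> pi^2 / 90) (at_right 0)"
    unfolding coth_def by real_asymp
  ultimately have "zeta_real 4 / pi^2 = pi^2 / 90"
    using tendsto_unique[OF trivial_limit_at_right_real] by blast
  then show ?thesis by (simp add: field_simps power4_eq_xxxx power2_eq_square)
qed

lemma has_sum_product_nonneg:
  fixes f g :: "nat \<Rightarrow> real"
  assumes "f sums s" "g sums t" "\<And>n. f n \<ge> 0" "\<And>n. g n \<ge> 0"
  shows "((\<lambda>(k, m). f k * g m) has_sum s * t) (UNIV \<times> UNIV)"
proof -
  have inner: "((\<lambda>m. f k * g m) has_sum f k * t) UNIV" for k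
    using assms(2,4) by (intro has_sum_cmult_right sums_nonneg_imp_has_sum)
  have outer: "((\<lambda>k. f k * t) has_sum s * t) UNIV"
    using assms(1,3) by (intro has_sum_cmult_left sums_nonneg_imp_has_sum)
  have "(\<lambda>(k, m). f k * g m) summable_on (UNIV \<times> UNIV)"
    using inner has_sum_imp_summable[OF outer] assms(3,4)
    by (intro summable_on_SigmaI) auto
  then show ?thesis
    using inner outer by (intro has_sum_SigmaI) auto
qed

definition double_term :: "real \<Rightarrow> nat \<Rightarrow> nat \<Rightarrow> real" where
  "double_term a k m =
     2 / (real (Suc k) ^ 2 * (a^2 * real (Suc k) ^ 2 + pi^2 * real (Suc m) ^ 2))"

definition double_sum :: "real \<Rightarrow> real" where
  "double_sum a = infsum (\<lambda>(k, m). double_term a k m) (UNIV \<times> UNIV)"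

lemma double_term_nonneg: "double_term a k m \<ge> 0"
  by (simp add: double_term_def add_nonneg_nonneg)

lemma double_term_le: "double_term a k m \<le> (2 / pi^2 * (1 / real (Suc k) ^ 2)) * (1 / real (Suc m) ^ 2)"
proof -
  define K where "K = real (Suc k)"
  define M where "M = real (Suc m)"
  have "K > 0" "M > 0" by (auto simp: K_def M_def)
  then have "2 / (K^2 * (a^2 * K^2 + pi^2 * M^2)) \<le> 2 / (K^2 * (pi^2 * M^2))"
    by (intro frac_le mult_left_mono) auto
  also have "\<dots> = (2 / pi^2 * (1 / K^2)) * (1 / M^2)"
    by simp
  finally show ?thesis
    by (simp only: double_term_def K_def M_def)
qed

text \<open>
  The dominating series sums to 2 zeta(2)^2 / pi^2 = pi^2/18.
\<close>
lemma product_double_sum: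
  "((\<lambda>(k, m). (2 / pi^2 * (1 / real (Suc k) ^ 2)) * (1 / real (Suc m) ^ 2)) has_sum pi^2 / 18)
     (UNIV \<times> UNIV)"
proof -
  have "(\<lambda>n. 1 / real (Suc n) ^ 2) sums (pi^2 / 6)"
    using zeta_real_sums[of 2] by (simp add: zeta_real_2)
  then have "((\<lambda>(k, m). (2 / pi^2 * (1 / real (Suc k) ^ 2)) * (1 / real (Suc m) ^ 2))
      has_sum (2 / pi^2 * (pi^2 / 6)) * (pi^2 / 6)) (UNIV \<times> UNIV)"
    by (intro has_sum_product_nonneg sums_mult) auto
  then show ?thesis by (simp add: power2_eq_square)
qed

lemma double_sum_has_sum: "((\<lambda>(k, m). double_term a k m) has_sum double_sum a) (UNIV \<times> UNIV)"
  unfolding double_sum_def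
  by (intro has_sum_infsum summable_on_comparison_test[OF has_sum_imp_summable[OF product_double_sum]])
    (use double_term_le double_term_nonneg in auto)

text \<open>
  Reflection formula for G: for a b = pi^2, the term (k, m) of G(a) and the term (m, k)
  of G(b) add up to the term (k, m) of the dominating product series.
\<close>
lemma double_sum_reflection:
  assumes a: "a > 0" and b: "b > 0" and ab: "a * b = pi^2"
  shows "double_sum a + double_sum b = pi^2 / 18"
proof -
  have terms: "double_term a k m + double_term b m k
      = (2 / pi^2 * (1 / real (Suc k) ^ 2)) * (1 / real (Suc m) ^ 2)" for k m
  proof -
    define K where "K = real (Suc k)"
    define M where "M = real (Suc m)"
    define X where "X = a^2 * K^2 + pi^2 * M^2"
    have pos: "K > 0" "M > 0" "X > 0" using a by (auto simp: K_def M_def X_def intro: add_pos_pos)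
    have "a^2 * b^2 = pi^4"
      using arg_cong[OF ab, of "\<lambda>x. x^2"] by (simp add: power_mult_distrib flip: power_mult)
    then have "b^2 * M^2 + pi^2 * K^2 = (pi^2 / a^2) * X"
      using a by (simp add: X_def field_simps)
    then have "double_term a k m + double_term b m k = 2 / (K^2 * X) + 2 / (M^2 * ((pi^2 / a^2) * X))"
      by (simp only: double_term_def K_def M_def X_def)
    also have "\<dots> = 2 * (pi^2 * M^2 + a^2 * K^2) / (pi^2 * K^2 * M^2 * X)"
      using pos a by (simp add: field_simps)
    also have "pi^2 * M^2 + a^2 * K^2 = X"
      by (simp add: X_def)
    also have "2 * X / (pi^2 * K^2 * M^2 * X) = (2 / pi^2 * (1 / K^2)) * (1 / M^2)"
      using pos by simp
    finally show ?thesis by (simp only: K_def M_def)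
  qed
  have "((\<lambda>(k, m). double_term b m k) has_sum double_sum b) (UNIV \<times> UNIV)"
    using double_sum_has_sum[of b] by (subst has_sum_swap) simp
  then have "((\<lambda>(k, m). double_term a k m + double_term b m k) has_sum double_sum a + double_sum b)
      (UNIV \<times> UNIV)"
    using has_sum_add[OF double_sum_has_sum[of a]] by (simp add: case_prod_unfold)
  then show ?thesis
    unfolding terms using has_sum_unique[OF _ product_double_sum] by blast
qed

text \<open>
  Summing G(a) over m first, by the partial fraction series of coth.
\<close>
lemma double_term_inner_sum:
  assumes a: "a > 0"
  shows "((\<lambda>m. double_term a k m) has_sum
           (coth (a * real (Suc k)) - 1 / (a * real (Suc k))) / (a * real (Suc k) ^ 3)) UNIV"
proof -
  define K where "K = real (Suc k)"
  have K: "K > 0" by (simp add: K_def)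
  have "(\<lambda>m. 2 * (a * K) / ((a * K)^2 + pi^2 * real (Suc m) ^ 2) / (a * K^3))
          sums ((coth (a * K) - 1 / (a * K)) / (a * K^3))"
    using a K by (intro sums_divide coth_partial_fractions) simp
  also have "(\<lambda>m. 2 * (a * K) / ((a * K)^2 + pi^2 * real (Suc m) ^ 2) / (a * K^3))
      = (\<lambda>m. double_term a k m)"
  proof
    fix m
    define M where "M = real (Suc m)"
    define D where "D = a^2 * K^2 + pi^2 * M^2"
    have "D > 0" using a K by (auto simp: D_def intro: add_pos_nonneg)
    then have "2 * (a * K) / D / (a * K^3) = 2 / (K^2 * D)"
      using a K by (simp add: field_simps power2_eq_square power3_eq_cube)
    then have "2 * (a * K) / ((a * K)^2 + pi^2 * M^2) / (a * K^3) = 2 / (K^2 * (a^2 * K^2 + pi^2 * M^2))"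
      by (simp add: D_def power_mult_distrib)
    then show "2 * (a * K) / ((a * K)^2 + pi^2 * real (Suc m) ^ 2) / (a * K^3) = double_term a k m"
      by (simp only: double_term_def K_def M_def)
  qed
  finally show ?thesis
    unfolding K_def by (rule sums_nonneg_imp_has_sum) (rule double_term_nonneg)
qed

lemma coth_cube_sums_double_sum:
  assumes a: "a > 0"
  shows "(\<lambda>k. coth (a * real (Suc k)) / real (Suc k) ^ 3) sums (a * double_sum a + zeta_real 4 / a)"
proof -
  have "((\<lambda>k. (coth (a * real (Suc k)) - 1 / (a * real (Suc k))) / (a * real (Suc k) ^ 3))
          has_sum double_sum a) UNIV"
    using double_sum_has_sum[of a] by (rule has_sum_Sigma') (use a double_term_inner_sum in auto)
  then have "(\<lambda>k. a * ((coth (a * real (Suc k)) - 1 / (a * real (Suc k))) / (a * real (Suc k) ^ 3))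
               + 1 / real (Suc k) ^ 4 / a) sums (a * double_sum a + zeta_real 4 / a)"
    using zeta_real_sums[of 4] by (intro sums_add sums_mult sums_divide) (auto dest: has_sum_imp_sums)
  also have "(\<lambda>k. a * ((coth (a * real (Suc k)) - 1 / (a * real (Suc k))) / (a * real (Suc k) ^ 3))
               + 1 / real (Suc k) ^ 4 / a) = (\<lambda>k. coth (a * real (Suc k)) / real (Suc k) ^ 3)"
  proof
    fix k
    define K where "K = real (Suc k)"
    have "K > 0" by (simp add: K_def)
    then have "a * ((coth (a * K) - 1 / (a * K)) / (a * K ^ 3)) + 1 / K ^ 4 / a = coth (a * K) / K ^ 3"
      using a by (simp add: field_simps power3_eq_cube power4_eq_xxxx)
    then show "a * ((coth (a * real (Suc k)) - 1 / (a * real (Suc k))) / (a * real (Suc k) ^ 3))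
               + 1 / real (Suc k) ^ 4 / a = coth (a * real (Suc k)) / real (Suc k) ^ 3"
      by (simp only: K_def)
  qed
  finally show ?thesis .
qed

definition lambert_sum :: "real \<Rightarrow> real" where
  "lambert_sum c = (\<Sum>n. 1 / (real (Suc n) ^ 3 * (exp (c * real (Suc n)) - 1)))"

lemma lambert_sum_sums:
  assumes c: "c > 0"
  shows "(\<lambda>n. 1 / (real (Suc n) ^ 3 * (exp (c * real (Suc n)) - 1))) sums lambert_sum c"
proof -
  have bound: "norm (1 / (real (Suc n) ^ 3 * (exp (c * real (Suc n)) - 1))) \<le> 1 / real (Suc n) ^ 4 / c" for n
  proof -
    define N where "N = real (Suc n)"
    have pos: "N > 0" "c * N > 0" using c by (auto simp: N_def)
    have "c * N \<le> exp (c * N) - 1"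
      using exp_ge_add_one_self[of "c * N"] by linarith
    then have "norm (1 / (N^3 * (exp (c * N) - 1))) = 1 / (N^3 * (exp (c * N) - 1))"
      using pos by simp
    also have "\<dots> \<le> 1 / (N^3 * (c * N))"
      using pos \<open>c * N \<le> exp (c * N) - 1\<close> by (intro frac_le mult_left_mono) auto
    also have "\<dots> = 1 / N^4 / c"
      by (simp add: power3_eq_cube power4_eq_xxxx)
    finally show ?thesis by (simp only: N_def)
  qed
  have "summable (\<lambda>n. 1 / real (Suc n) ^ 4 / c)"
    by (intro summable_divide summable_inverse_power_Suc) simp
  then have "summable (\<lambda>n. 1 / (real (Suc n) ^ 3 * (exp (c * real (Suc n)) - 1)))"
    using bound by (rule summable_comparison_test')
  then show ?thesis
    unfolding lambert_sum_def by (rule summable_sums)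
qed

lemma coth_cube_sums_lambert_sum:
  assumes a: "a > 0"
  shows "(\<lambda>k. coth (a * real (Suc k)) / real (Suc k) ^ 3) sums (zeta_real 3 + 2 * lambert_sum (2 * a))"
proof -
  have "(\<lambda>k. 1 / real (Suc k) ^ 3 + 2 * (1 / (real (Suc k) ^ 3 * (exp ((2 * a) * real (Suc k)) - 1))))
          sums (zeta_real 3 + 2 * lambert_sum (2 * a))"
    using a zeta_real_sums[of 3] by (intro sums_add sums_mult lambert_sum_sums) auto
  also have "(\<lambda>k. 1 / real (Suc k) ^ 3 + 2 * (1 / (real (Suc k) ^ 3 * (exp ((2 * a) * real (Suc k)) - 1))))
      = (\<lambda>k. coth (a * real (Suc k)) / real (Suc k) ^ 3)"
  proof
    fix k
    define K where "K = real (Suc k)"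
    have "a * K \<noteq> 0" using a by (simp add: K_def)
    then have "1 / K ^ 3 + 2 * (1 / (K ^ 3 * (exp (2 * (a * K)) - 1))) = coth (a * K) / K ^ 3"
      by (simp add: coth_conv_exp add_divide_distrib)
    then show "1 / real (Suc k) ^ 3 + 2 * (1 / (real (Suc k) ^ 3 * (exp ((2 * a) * real (Suc k)) - 1)))
        = coth (a * real (Suc k)) / real (Suc k) ^ 3"
      by (simp only: K_def mult.assoc)
  qed
  finally show ?thesis .
qed

lemma lambert_sum_functional_equation:
  assumes "a > 0"
  shows "a * double_sum a + zeta_real 4 / a = zeta_real 3 + 2 * lambert_sum (2 * a)"
  using sums_unique2[OF coth_cube_sums_double_sum[OF assms] coth_cube_sums_lambert_sum[OF assms]] .

text \<open>
  Eliminating G between the functional equations at a = pi/2, pi, 2 pi, using the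
  reflection formula for the pairs (pi, pi) and (pi/2, 2 pi).
\<close>
lemma zeta_3_lambert_sums:
  "zeta_real 3 = 28 * lambert_sum pi - 37 * lambert_sum (2 * pi) + 7 * lambert_sum (4 * pi)"
proof -
  define Z where "Z = zeta_real 4 / pi"
  have Z: "pi^2 / 18 * pi = 5 * Z"
    by (simp add: Z_def zeta_real_4 power2_eq_square power4_eq_xxxx)
  have at_pi: "pi * double_sum pi + Z = zeta_real 3 + 2 * lambert_sum (2 * pi)"
    using lambert_sum_functional_equation[of pi] by (simp add: Z_def)
  have at_half_pi: "pi * double_sum (pi / 2) / 2 + 2 * Z = zeta_real 3 + 2 * lambert_sum pi"
    using lambert_sum_functional_equation[of "pi / 2"] by (simp add: Z_def)
  have at_two_pi: "2 * (pi * double_sum (2 * pi)) + Z / 2 = zeta_real 3 + 2 * lambert_sum (4 * pi)"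
    using lambert_sum_functional_equation[of "2 * pi"] by (simp add: Z_def mult_ac)
  have scaled: "pi * x + pi * y = 5 * Z" if "x + y = pi^2 / 18" for x y
  proof -
    have "pi * x + pi * y = pi^2 / 18 * pi"
      using that by (metis distrib_left mult.commute)
    then show ?thesis using Z by simp
  qed
  have "pi * double_sum pi + pi * double_sum pi = 5 * Z"
    by (intro scaled double_sum_reflection) (simp_all add: power2_eq_square)
  moreover have "pi * double_sum (pi / 2) + pi * double_sum (2 * pi) = 5 * Z"
    by (intro scaled double_sum_reflection) (simp_all add: power2_eq_square)
  ultimately show ?thesis
    using at_pi at_half_pi at_two_pi by linarith
qed

lemma inverse_sinh_conv_exp:
  fixes x :: real
  assumes "x \<noteq> 0"
  shows "1 / sinh x = 2 / (exp x - 1) - 2 / (exp (2 * x) - 1)"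
proof -
  define u where "u = exp x"
  have "u > 0" by (simp add: u_def)
  have u: "u \<noteq> 0" "u + 1 \<noteq> 0" "u - 1 \<noteq> 0"
    using \<open>u > 0\<close> assms by (linarith, linarith, simp add: u_def)
  have sq: "exp (2 * x) - 1 = (u - 1) * (u + 1)"
    by (simp add: u_def algebra_simps flip: exp_add)
  have sinh: "sinh x = (u - 1) * (u + 1) / (2 * u)"
    using u by (simp add: sinh_def u_def exp_minus field_simps)
  have "(u - 1) * (u + 1) \<noteq> 0" using u by simp
  then show ?thesis
    unfolding sq sinh u_def[symmetric] using u by (simp add: divide_simps)
qed

lemma inverse_exp_plus_one:
  fixes x :: real
  assumes "x \<noteq> 0"
  shows "1 / (exp x + 1) = 1 / (exp x - 1) - 2 / (exp (2 * x) - 1)"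
proof -
  define u where "u = exp x"
  have "u > 0" by (simp add: u_def)
  have u: "u + 1 \<noteq> 0" "u - 1 \<noteq> 0"
    using \<open>u > 0\<close> assms by (linarith, simp add: u_def)
  have sq: "exp (2 * x) - 1 = (u - 1) * (u + 1)"
    by (simp add: u_def algebra_simps flip: exp_add)
  have "(u - 1) * (u + 1) \<noteq> 0" using u by simp
  then show ?thesis
    unfolding sq u_def[symmetric] using u by (simp add: divide_simps)
qed
lemma sinh_cube_sums:
  assumes c: "c > 0"
  shows "(\<lambda>n. 1 / (real (Suc n) ^ 3 * sinh (c * real (Suc n))))
           sums (2 * lambert_sum c - 2 * lambert_sum (2 * c))"
proof -
  have "(\<lambda>n. 2 * (1 / (real (Suc n) ^ 3 * (exp (c * real (Suc n)) - 1)))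
            - 2 * (1 / (real (Suc n) ^ 3 * (exp ((2 * c) * real (Suc n)) - 1))))
          sums (2 * lambert_sum c - 2 * lambert_sum (2 * c))"
    using c by (intro sums_diff sums_mult lambert_sum_sums) auto
  also have "(\<lambda>n. 2 * (1 / (real (Suc n) ^ 3 * (exp (c * real (Suc n)) - 1)))
            - 2 * (1 / (real (Suc n) ^ 3 * (exp ((2 * c) * real (Suc n)) - 1))))
      = (\<lambda>n. 1 / (real (Suc n) ^ 3 * sinh (c * real (Suc n))))"
  proof
    fix n
    define N where "N = real (Suc n)"
    have "c * N \<noteq> 0" using c by (simp add: N_def)
    have "1 / (N^3 * sinh (c * N)) = 1 / N^3 * (1 / sinh (c * N))"
      by simp
    also have "\<dots> = 1 / N^3 * (2 / (exp (c * N) - 1) - 2 / (exp (2 * (c * N)) - 1))"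
      by (simp only: inverse_sinh_conv_exp[OF \<open>c * N \<noteq> 0\<close>])
    also have "\<dots> = 2 * (1 / (N^3 * (exp (c * N) - 1))) - 2 * (1 / (N^3 * (exp ((2 * c) * N) - 1)))"
      by (simp add: right_diff_distrib mult.assoc)
    finally show "2 * (1 / (real (Suc n) ^ 3 * (exp (c * real (Suc n)) - 1)))
        - 2 * (1 / (real (Suc n) ^ 3 * (exp ((2 * c) * real (Suc n)) - 1)))
        = 1 / (real (Suc n) ^ 3 * sinh (c * real (Suc n)))"
      by (simp only: N_def)
  qed
  finally show ?thesis .
qed

lemma exp_plus_one_cube_sums:
  assumes c: "c > 0"
  shows "(\<lambda>n. 1 / (real (Suc n) ^ 3 * (exp (c * real (Suc n)) + 1)))
           sums (lambert_sum c - 2 * lambert_sum (2 * c))"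
proof -
  have "(\<lambda>n. 1 / (real (Suc n) ^ 3 * (exp (c * real (Suc n)) - 1))
            - 2 * (1 / (real (Suc n) ^ 3 * (exp ((2 * c) * real (Suc n)) - 1))))
          sums (lambert_sum c - 2 * lambert_sum (2 * c))"
    using c by (intro sums_diff sums_mult lambert_sum_sums) auto
  also have "(\<lambda>n. 1 / (real (Suc n) ^ 3 * (exp (c * real (Suc n)) - 1))
            - 2 * (1 / (real (Suc n) ^ 3 * (exp ((2 * c) * real (Suc n)) - 1))))
      = (\<lambda>n. 1 / (real (Suc n) ^ 3 * (exp (c * real (Suc n)) + 1)))"
  proof
    fix n
    define N where "N = real (Suc n)"
    have "c * N \<noteq> 0" using c by (simp add: N_def)
    have "1 / (N^3 * (exp (c * N) + 1)) = 1 / N^3 * (1 / (exp (c * N) + 1))"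
      by simp
    also have "\<dots> = 1 / N^3 * (1 / (exp (c * N) - 1) - 2 / (exp (2 * (c * N)) - 1))"
      by (simp only: inverse_exp_plus_one[OF \<open>c * N \<noteq> 0\<close>])
    also have "\<dots> = 1 / (N^3 * (exp (c * N) - 1)) - 2 * (1 / (N^3 * (exp ((2 * c) * N) - 1)))"
      by (simp add: right_diff_distrib mult.assoc)
    finally show "1 / (real (Suc n) ^ 3 * (exp (c * real (Suc n)) - 1))
        - 2 * (1 / (real (Suc n) ^ 3 * (exp ((2 * c) * real (Suc n)) - 1)))
        = 1 / (real (Suc n) ^ 3 * (exp (c * real (Suc n)) + 1))"
      by (simp only: N_def)
  qed
  finally show ?thesis .
qed

theorem mainTheorem1:
  shows "zeta_real 3 =
      14 * (\<Sum>n. 1 / (real (Suc n) ^ 3 * sinh (pi * real (Suc n))))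
    - 11 / 2 * (\<Sum>n. 1 / (real (Suc n) ^ 3 * (exp (2 * pi * real (Suc n)) - 1)))
    - 7 / 2 * (\<Sum>n. 1 / (real (Suc n) ^ 3 * (exp (2 * pi * real (Suc n)) + 1)))"
proof -
  have "(\<Sum>n. 1 / (real (Suc n) ^ 3 * sinh (pi * real (Suc n))))
      = 2 * lambert_sum pi - 2 * lambert_sum (2 * pi)"
    by (rule sums_unique[OF sinh_cube_sums, symmetric]) simp
  moreover have "(\<Sum>n. 1 / (real (Suc n) ^ 3 * (exp (2 * pi * real (Suc n)) - 1)))
      = lambert_sum (2 * pi)"
    by (simp add: lambert_sum_def)
  moreover have "(\<Sum>n. 1 / (real (Suc n) ^ 3 * (exp (2 * pi * real (Suc n)) + 1)))
      = lambert_sum (2 * pi) - 2 * lambert_sum (4 * pi)"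
    using sums_unique[OF exp_plus_one_cube_sums[of "2 * pi"], symmetric] by simp
  ultimately show ?thesis
    using zeta_3_lambert_sums by linarith
qed

end
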